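(* Let $m,n$ be even positive integers and let $\mathcal{X}_0,\mathcal{X}_1\subseteq\{0,1\}^{2mn}$ be as defined in the context. Let $p$ be a real multilinear polynomial in $2mn$ variables such that $p(x)\neq 0$ for all $x\in\mathcal{X}_1$ and $p(x)=0$ for all $x\in\mathcal{X}_0$. Then $\deg(p)\geq \min(n/2,m/2)+1$.
   Context: For $z\in\{0,1\}^k$ let $w(z)$ denote its Hamming weight. Let $\mathcal{A}_1=\{0^m y : y\in\{0,1\}^m,\ m/2\le w(y)\le m\}$ and $\mathcal{A}_0=\{y0^m : y\in\{0,1\}^m,\ m/2\le w(y)\le m\}$ (subsets of $\{0,1\}^{2m}$). A string $x\in\{0,1\}^{2mn}$ is viewed as $n$ consecutive blocks of $2m$ bits, each block being $x^{(0,i)}x^{(1,i)}$ with $x^{(0,i)},x^{(1,i)}\in\{0,1\}^m$, $i=1,\dots,n$. Define $\mathcal{X}_1=\mathcal{A}_0\times\cdots\times\mathcal{A}_0$ ($n$ factors) and $\mathcal{X}_0=\bigcup\{\mathcal{A}_{y_1}\times\cdots\times\mathcal{A}_{y_n} : y\in\{0,1\}^n,\ w(y)=n/2\}$. A multilinear polynomial is $p(x)=\sum_{S\subseteq[N]}a_S\prod_{i\in S}x_i$ with real $a_S$; its degree is $\max\{|S|: a_S\neq 0\}$. *)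

theory Defs
  imports Complex_Main
begin

text \<open>Points of {0,1}^N are functions nat => bool, with coordinates 0..N-1 used
 (coordinates >= N are required to be False in the sets below).
 A multilinear polynomial in N variables is a coefficient function
 a :: nat set => real, supported on subsets of {..<N}.\<close>

definition ml_eval :: "nat \<Rightarrow> (nat set \<Rightarrow> real) \<Rightarrow> (nat \<Rightarrow> bool) \<Rightarrow> real" where
  "ml_eval N a x = (\<Sum>S\<in>Pow {..<N}. a S * (\<Prod>i\<in>S. of_bool (x i)))"

definition ml_degree :: "nat \<Rightarrow> (nat set \<Rightarrow> real) \<Rightarrow> nat" where
  "ml_degree N a = Max ({card S | S. S \<subseteq> {..<N} \<and> a S \<noteq> 0} \<union> {0})"

text \<open>Block i (0-based) occupies coordinates 2mi .. 2mi+2m-1;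
 x^(0,i) is coordinates 2mi+j, x^(1,i) is coordinates 2mi+m+j, j<m.
 in_A m b x i: block i of x lies in A_b.\<close>

definition in_A :: "nat \<Rightarrow> bool \<Rightarrow> (nat \<Rightarrow> bool) \<Rightarrow> nat \<Rightarrow> bool" where
  "in_A m b x i =
    (if b then (\<forall>j<m. \<not> x (2*m*i + j)) \<and> m \<le> 2 * card {j. j < m \<and> x (2*m*i + m + j)}
     else (\<forall>j<m. \<not> x (2*m*i + m + j)) \<and> m \<le> 2 * card {j. j < m \<and> x (2*m*i + j)})"

definition X1 :: "nat \<Rightarrow> nat \<Rightarrow> (nat \<Rightarrow> bool) set" where
  "X1 m n = {x. (\<forall>k\<ge>2*m*n. \<not> x k) \<and> (\<forall>i<n. in_A m False x i)}"

definition X0 :: "nat \<Rightarrow> nat \<Rightarrow> (nat \<Rightarrow> bool) set" where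
  "X0 m n = {x. (\<forall>k\<ge>2*m*n. \<not> x k) \<and>
     (\<exists>y :: nat \<Rightarrow> bool. 2 * card {i. i < n \<and> y i} = n \<and> (\<forall>i<n. in_A m (y i) x i))}"

end

(* A multilinear polynomial p of degree d is annihilated by every finite difference of
   order greater than d: if Z is a set of more than d coordinates, the alternating sum of p
   over the flips of x along all subsets of Z vanishes. So p(x) = 0 as soon as p vanishes at
   all nonempty flips of x along such a Z, and by well-founded induction p vanishes on a set
   of points each of which admits such a Z whose flips stay in the set and decrease a measure.

   Suppose deg p <= min(n/2, m/2). First, for each D with |D| = n/2, p vanishes at all points
   supported on the halves x^(1,i), i in D, and x^(0,i), i not in D: such a point outside X_0
   has one of these halves with fewer than m/2 ones, and filling in its more than m/2 zeros
   is a descent step. Second, p vanishes at all points supported on the halves x^(0,i): if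
   such a point touches at most n/2 blocks, the first step applies to some D avoiding them;
   otherwise it has more than n/2 ones, and switching them off is a descent step. The point
   whose halves x^(0,i) are all ones lies in X_1, so p cannot vanish there. *)

theory Submission
  imports Defs
begin

definition flip :: "('a \<Rightarrow> bool) \<Rightarrow> 'a set \<Rightarrow> 'a \<Rightarrow> bool" where
  "flip x W = (\<lambda>c. if c \<in> W then \<not> x c else x c)"

lemma Collect_flip_eq_Un: "(\<And>c. c \<in> W \<Longrightarrow> \<not> x c) \<Longrightarrow> Collect (flip x W) = Collect x \<union> W"
  by (auto simp: flip_def)

lemma Collect_flip_eq_Diff: "W \<subseteq> Collect x \<Longrightarrow> Collect (flip x W) = Collect x - W"
  by (auto simp: flip_def)

lemma card_le_ml_degree:
  assumes "S \<subseteq> {..<N}" "a S \<noteq> 0"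
  shows "card S \<le> ml_degree N a"
  unfolding ml_degree_def
proof (rule Max_ge)
  have "{card S | S. S \<subseteq> {..<N} \<and> a S \<noteq> 0} \<subseteq> card ` Pow {..<N}" by auto
  then show "finite ({card S | S. S \<subseteq> {..<N} \<and> a S \<noteq> 0} \<union> {0})"
    using finite_surj by auto
qed (use assms in auto)

lemma sum_Pow_alternating_eq_0:
  fixes f :: "'a set \<Rightarrow> 'b::ring_1"
  assumes "finite Z" "j \<in> Z" and f_indep: "\<And>W. W \<subseteq> Z - {j} \<Longrightarrow> f (insert j W) = f W"
  shows "(\<Sum>W\<in>Pow Z. (-1) ^ card W * f W) = 0"
proof -
  define Z' where "Z' = Z - {j}"
  have Z: "Z = insert j Z'" "j \<notin> Z'" "finite Z'"
    using assms(1,2) by (auto simp: Z'_def)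
  let ?g = "\<lambda>W. (-1) ^ card W * f W"
  have "sum ?g (Pow Z) = sum ?g (Pow Z') + sum ?g (insert j ` Pow Z')"
    unfolding Z(1) Pow_insert using Z(2,3) by (intro sum.union_disjoint) auto
  also have "sum ?g (insert j ` Pow Z') = sum (?g \<circ> insert j) (Pow Z')"
    using Z(2) by (intro sum.reindex inj_onI) (metis PowD insert_ident subsetD)
  also have "\<dots> = sum (\<lambda>W. - ?g W) (Pow Z')"
  proof (rule sum.cong)
    fix W assume "W \<in> Pow Z'"
    then have "finite W" "j \<notin> W" using Z by (auto intro: finite_subset)
    then have "card (insert j W) = Suc (card W)" by simp
    with \<open>W \<in> Pow Z'\<close> show "(?g \<circ> insert j) W = - ?g W"
      by (simp add: f_indep Z'_def)
  qed simp
  finally show ?thesis by (simp add: sum_negf)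
qed

lemma sum_Pow_alternating_ml_eval_flip:
  assumes "finite Z" "ml_degree N a < card Z"
  shows "(\<Sum>W\<in>Pow Z. (-1) ^ card W * ml_eval N a (flip x W)) = 0"
proof -
  have monomial: "(\<Sum>W\<in>Pow Z. (-1) ^ card W * (\<Prod>i\<in>S. of_bool (flip x W i))) = (0::real)"
    if "S \<subseteq> {..<N}" "a S \<noteq> 0" for S
  proof -
    have "card S < card Z" using card_le_ml_degree[of S N a] that assms(2) by linarith
    moreover have "finite S" using that(1) finite_subset by blast
    ultimately obtain j where "j \<in> Z" "j \<notin> S"
      using card_mono[of S Z] by (meson not_le subsetI)
    then show ?thesis
    proof (intro sum_Pow_alternating_eq_0 assms(1))
      fix W show "(\<Prod>i\<in>S. of_bool (flip x (insert j W) i)) = (\<Prod>i\<in>S. of_bool (flip x W i) :: real)"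
        using \<open>j \<notin> S\<close> by (intro prod.cong) (auto simp: flip_def)
    qed
  qed
  have "(\<Sum>W\<in>Pow Z. (-1) ^ card W * ml_eval N a (flip x W))
      = (\<Sum>S\<in>Pow {..<N}. a S * (\<Sum>W\<in>Pow Z. (-1) ^ card W * (\<Prod>i\<in>S. of_bool (flip x W i))))"
    unfolding ml_eval_def sum_distrib_left mult.left_commute[of "(-1) ^ _"]
    by (rule sum.swap)
  also have "\<dots> = 0"
    using monomial by (intro sum.neutral) auto
  finally show ?thesis .
qed

lemma ml_eval_eq_0_if_flips_vanish:
  assumes "finite Z" "ml_degree N a < card Z"
    and "\<And>W. W \<subseteq> Z \<Longrightarrow> W \<noteq> {} \<Longrightarrow> ml_eval N a (flip x W) = 0"
  shows "ml_eval N a x = 0"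
proof -
  let ?g = "\<lambda>W. (-1) ^ card W * ml_eval N a (flip x W)"
  have "0 = sum ?g (Pow Z)"
    using sum_Pow_alternating_ml_eval_flip[OF assms(1,2)] by simp
  also have "\<dots> = ?g {} + sum ?g (Pow Z - {{}})"
    using assms(1) by (intro sum.remove) auto
  also have "sum ?g (Pow Z - {{}}) = 0"
    using assms(3) by (intro sum.neutral) auto
  finally show ?thesis by (simp add: flip_def)
qed

lemma ml_eval_eq_0_by_descent:
  fixes \<mu> :: "(nat \<Rightarrow> bool) \<Rightarrow> nat"
  assumes step: "\<And>x. R x \<Longrightarrow> ml_eval N a x \<noteq> 0 \<Longrightarrow>
      \<exists>Z. finite Z \<and> ml_degree N a < card Z \<and> (\<forall>W\<subseteq>Z. W \<noteq> {} \<longrightarrow> R (flip x W) \<and> \<mu> (flip x W) < \<mu> x)"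
  shows "R x \<Longrightarrow> ml_eval N a x = 0"
proof (induction "\<mu> x" arbitrary: x rule: less_induct)
  case less
  show ?case
  proof (rule ccontr)
    assume "ml_eval N a x \<noteq> 0"
    then obtain Z where "finite Z" "ml_degree N a < card Z"
      and flips: "\<And>W. W \<subseteq> Z \<Longrightarrow> W \<noteq> {} \<Longrightarrow> R (flip x W) \<and> \<mu> (flip x W) < \<mu> x"
      using step[OF less.prems] by blast
    have "ml_eval N a (flip x W) = 0" if "W \<subseteq> Z" "W \<noteq> {}" for W
      using flips[OF that] less.hyps by blast
    with \<open>finite Z\<close> \<open>ml_degree N a < card Z\<close> have "ml_eval N a x = 0"
      by (rule ml_eval_eq_0_if_flips_vanish)
    with \<open>ml_eval N a x \<noteq> 0\<close> show False by contradiction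
  qed
qed

definition half_coord :: "nat \<Rightarrow> bool \<Rightarrow> nat \<Rightarrow> nat \<Rightarrow> nat" where
  "half_coord m b i j = 2*m*i + (if b then m else 0) + j"

text \<open>The coordinates of the halves x^(1,i), i in D, and x^(0,i), i not in D: the support of
  the points whose block i lies in A_(i in D) for every i.\<close>

definition active_coords :: "nat \<Rightarrow> nat \<Rightarrow> nat set \<Rightarrow> nat set" where
  "active_coords m n D = {c. c < 2*m*n \<and> (c mod (2*m) < m \<longleftrightarrow> c div (2*m) \<notin> D)}"

lemma finite_active_coords: "finite (active_coords m n D)"
  unfolding active_coords_def by simp

lemma in_A_iff:
  "in_A m b x i \<longleftrightarrow>
    (\<forall>j<m. \<not> x (half_coord m (\<not> b) i j)) \<and> m \<le> 2 * card {j. j < m \<and> x (half_coord m b i j)}"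
  by (cases b) (simp_all add: in_A_def half_coord_def)

lemma half_coord_in_active_coords_iff:
  assumes "i < n" "j < m"
  shows "half_coord m b i j \<in> active_coords m n D \<longleftrightarrow> (b \<longleftrightarrow> i \<in> D)"
proof -
  let ?r = "(if b then m else 0) + j"
  have "half_coord m b i j = ?r + i * (2*m)"
    by (simp add: half_coord_def)
  moreover have "?r < 2*m" using assms(2) by simp
  ultimately have "half_coord m b i j div (2*m) = i" "half_coord m b i j mod (2*m) = ?r"
    by simp_all
  moreover have "half_coord m b i j < 2*m*n"
  proof -
    have "half_coord m b i j < 2*m*(i+1)" using \<open>?r < 2*m\<close> by (simp add: half_coord_def)
    also have "\<dots> \<le> 2*m*n" using assms(1) by (intro mult_le_mono2) simp
    finally show ?thesis .
  qed
  ultimately show ?thesis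
    using assms(2) unfolding active_coords_def by auto
qed

lemma in_X0_if_in_A:
  assumes "Collect x \<subseteq> active_coords m n D" "D \<subseteq> {..<n}" "2 * card D = n"
    and "\<forall>i<n. in_A m (i \<in> D) x i"
  shows "x \<in> X0 m n"
  unfolding X0_def
proof (intro CollectI conjI allI impI exI)
  show "\<not> x c" if "2*m*n \<le> c" for c
    using assms(1) that unfolding active_coords_def by auto
  have "{i. i < n \<and> i \<in> D} = D" using assms(2) by auto
  then show "2 * card {i. i < n \<and> i \<in> D} = n" using assms(3) by simp
qed (use assms(4) in simp)

lemma light_half_if_not_in_A:
  assumes "Collect x \<subseteq> active_coords m n D" "i < n" "\<not> in_A m (i \<in> D) x i"
  shows "2 * card {j. j < m \<and> x (half_coord m (i \<in> D) i j)} < m"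
proof -
  have "\<not> x (half_coord m (i \<notin> D) i j)" if "j < m" for j
    using assms(1,2) that half_coord_in_active_coords_iff[of i n j m "i \<notin> D" D] by auto
  then show ?thesis using assms(3) unfolding in_A_iff by auto
qed

lemma indicator_active_coords_empty_in_X1: "(\<lambda>c. c \<in> active_coords m n {}) \<in> X1 m n"
  unfolding X1_def
proof (intro CollectI conjI allI impI)
  show "c \<notin> active_coords m n {}" if "2*m*n \<le> c" for c
    using that unfolding active_coords_def by simp
  fix i assume "i < n"
  then have "{j. j < m \<and> half_coord m False i j \<in> active_coords m n {}} = {..<m}"
    using half_coord_in_active_coords_iff[of i n _ m False "{}"] by auto
  then show "in_A m False (\<lambda>c. c \<in> active_coords m n {}) i"
    using \<open>i < n\<close> half_coord_in_active_coords_iff[of i n _ m True "{}"] unfolding in_A_iff by auto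
qed

lemma ml_eval_eq_0_if_supported_on_active_coords:
  assumes deg: "ml_degree N a \<le> m div 2"
    and X0: "\<And>x. x \<in> X0 m n \<Longrightarrow> ml_eval N a x = 0"
    and D: "D \<subseteq> {..<n}" "2 * card D = n"
  shows "Collect x \<subseteq> active_coords m n D \<Longrightarrow> ml_eval N a x = 0"
proof (rule ml_eval_eq_0_by_descent[where \<mu> = "\<lambda>x. card (active_coords m n D - Collect x)"])
  fix x assume supp: "Collect x \<subseteq> active_coords m n D" and "ml_eval N a x \<noteq> 0"
  then have "x \<notin> X0 m n" using X0 by auto
  then obtain i where i: "i < n" "\<not> in_A m (i \<in> D) x i"
    using in_X0_if_in_A[OF supp D] by blast
  let ?h = "half_coord m (i \<in> D) i"
  let ?ones = "{j. j < m \<and> x (?h j)}"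
  define Z where "Z = ?h ` ({..<m} - ?ones)"
  have "inj ?h"
    by (rule injI) (simp add: half_coord_def)
  then have "card Z = card ({..<m} - ?ones)"
    unfolding Z_def by (intro card_image inj_on_subset[OF \<open>inj ?h\<close>]) simp
  also have "\<dots> = m - card ?ones"
    by (subst card_Diff_subset) auto
  finally have "ml_degree N a < card Z"
    using light_half_if_not_in_A[OF supp i] deg by linarith
  moreover have Z: "Z \<subseteq> active_coords m n D - Collect x"
    unfolding Z_def using half_coord_in_active_coords_iff[OF \<open>i < n\<close>, of _ m "i \<in> D" D] by auto
  moreover have "Collect (flip x W) \<subseteq> active_coords m n D \<and>
      card (active_coords m n D - Collect (flip x W)) < card (active_coords m n D - Collect x)"
    if "W \<subseteq> Z" "W \<noteq> {}" for W
  proof -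
    have flipped: "Collect (flip x W) = Collect x \<union> W"
      using that Z by (intro Collect_flip_eq_Un) auto
    have "active_coords m n D - Collect (flip x W) \<subset> active_coords m n D - Collect x"
      unfolding flipped using that Z by blast
    then have "card (active_coords m n D - Collect (flip x W)) < card (active_coords m n D - Collect x)"
      by (simp add: psubset_card_mono finite_active_coords)
    moreover have "Collect (flip x W) \<subseteq> active_coords m n D"
      unfolding flipped using supp that Z by blast
    ultimately show ?thesis by blast
  qed
  ultimately show "\<exists>Z. finite Z \<and> ml_degree N a < card Z \<and> (\<forall>W\<subseteq>Z. W \<noteq> {} \<longrightarrow>
      Collect (flip x W) \<subseteq> active_coords m n D \<and>
      card (active_coords m n D - Collect (flip x W)) < card (active_coords m n D - Collect x))"
    using finite_subset[OF Z] finite_active_coords by (intro exI[of _ Z]) auto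
qed

lemma ml_eval_eq_0_if_supported_on_left_halves:
  assumes deg: "ml_degree N a \<le> m div 2" "ml_degree N a \<le> n div 2"
    and "even n"
    and X0: "\<And>x. x \<in> X0 m n \<Longrightarrow> ml_eval N a x = 0"
  shows "Collect x \<subseteq> active_coords m n {} \<Longrightarrow> ml_eval N a x = 0"
proof (rule ml_eval_eq_0_by_descent[where \<mu> = "\<lambda>x. card (Collect x)"])
  fix x assume supp: "Collect x \<subseteq> active_coords m n {}" and "ml_eval N a x \<noteq> 0"
  have fin: "finite (Collect x)"
    using supp finite_active_coords finite_subset by blast
  define B where "B = (\<lambda>c. c div (2*m)) ` Collect x"
  have "n div 2 < card B"
  proof (rule ccontr)
    assume "\<not> n div 2 < card B"
    moreover have "c div (2*m) < n" if "c < 2*m*n" for c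
      using that less_mult_imp_div_less[of c n "2*m"] by (simp add: mult.commute)
    then have "B \<subseteq> {..<n}"
      using supp unfolding B_def active_coords_def by auto
    ultimately have "n div 2 \<le> card ({..<n} - B)"
      using card_Diff_subset[of B "{..<n}"] fin unfolding B_def by auto
    then obtain D where D: "D \<subseteq> {..<n} - B" "card D = n div 2"
      by (meson obtain_subset_with_card_n)
    have "Collect x \<subseteq> active_coords m n D"
      using supp D(1) unfolding active_coords_def B_def by auto
    then have "ml_eval N a x = 0"
      using D \<open>even n\<close> by (intro ml_eval_eq_0_if_supported_on_active_coords[OF deg(1) X0]) auto
    with \<open>ml_eval N a x \<noteq> 0\<close> show False by contradiction
  qed
  also have "card B \<le> card (Collect x)"
    unfolding B_def using fin by (rule card_image_le)
  finally have "ml_degree N a < card (Collect x)"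
    using deg(2) by linarith
  moreover have "Collect (flip x W) \<subseteq> active_coords m n {} \<and> card (Collect (flip x W)) < card (Collect x)"
    if "W \<subseteq> Collect x" "W \<noteq> {}" for W
    using supp fin that by (auto simp: Collect_flip_eq_Diff intro!: psubset_card_mono)
  ultimately show "\<exists>Z. finite Z \<and> ml_degree N a < card Z \<and> (\<forall>W\<subseteq>Z. W \<noteq> {} \<longrightarrow>
      Collect (flip x W) \<subseteq> active_coords m n {} \<and> card (Collect (flip x W)) < card (Collect x))"
    using fin by blast
qed

theorem lemma2:
  fixes m n :: nat and a :: "nat set \<Rightarrow> real"
  assumes "even m" "even n" "m > 0" "n > 0"
    and "\<And>S. \<not> S \<subseteq> {..<2*m*n} \<Longrightarrow> a S = 0"
    and "\<And>x. x \<in> X1 m n \<Longrightarrow> ml_eval (2*m*n) a x \<noteq> 0"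
    and "\<And>x. x \<in> X0 m n \<Longrightarrow> ml_eval (2*m*n) a x = 0"
  shows "ml_degree (2*m*n) a \<ge> min (n div 2) (m div 2) + 1"
proof (rule ccontr)
  assume "\<not> ?thesis"
  then have deg: "ml_degree (2*m*n) a \<le> m div 2" "ml_degree (2*m*n) a \<le> n div 2"
    by auto
  let ?x = "\<lambda>c. c \<in> active_coords m n {}"
  have "ml_eval (2*m*n) a ?x = 0"
    using ml_eval_eq_0_if_supported_on_left_halves[OF deg \<open>even n\<close> assms(7)] by simp
  moreover have "?x \<in> X1 m n"
    by (rule indicator_active_coords_empty_in_X1)
  ultimately show False
    using assms(6) by blast
qed

end
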